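(* For any integers $k,l\geq 1$, the equation $$[[x_1,\dots,x_k],[x_{k+1},\dots,x_{k+l}]]=\beta_{k+l}({\sf Sum}(C_{k,l}))$$ holds in $\mathbb Z\langle x_1,\dots,x_{k+l}\rangle$.
   Context: $\mathbb Z\langle x_1,\dots,x_m\rangle$ is the free associative ring on $x_1,\dots,x_m$, with bracket $[u,v]=uv-vu$ and left-normed brackets $[u_1,\dots,u_r]=[[u_1,\dots,u_{r-1}],u_r]$. $S_m$ is the symmetric group on $\{1,\dots,m\}$, with product $(\sigma\tau)(i)=\sigma(\tau(i))$. $\gamma_m$ is the additive subgroup spanned by the monomials $x_{\sigma(1)}\cdots x_{\sigma(m)}$, $\sigma\in S_m$; $\beta_m:\gamma_m\to\gamma_m$ is the homomorphism with $\beta_m(x_{\sigma(1)}\cdots x_{\sigma(m)})=[x_{\sigma(1)},\dots,x_{\sigma(m)}]$; for $T\subseteq S_m$, ${\sf Sum}(T)=\sum_{\sigma\in T}x_{\sigma(1)}\cdots x_{\sigma(m)}$. An $(s,t)$-shuffle is a pair $(\alpha,\beta)$ of strictly increasing maps $\alpha:\{1,\dots,s\}\to\{1,\dots,s+t\}$, $\beta:\{1,\dots,t\}\to\{1,\dots,s+t\}$ with disjoint images; ${\sf Sh}^1(s,t)$ is the set of those with $\alpha(1)=1$. For $k,l\geq1$, $0\leq i\leq l-1$ and $(\alpha,\beta)\in{\sf Sh}^1(l-i,i)$, let $\tilde\sigma_{\alpha,\beta,k,l}\in S_{k+l}$ be given by $\tilde\sigma(j)=j$ for $1\leq j\leq k$,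 $\tilde\sigma(k+j)=k+\beta(i+1-j)$ for $1\leq j\leq i$, and $\tilde\sigma(k+i+j)=k+\alpha(j)$ for $1\leq j\leq l-i$; let $\sigma_{\alpha,\beta,k,l}=\tilde\sigma_{\alpha,\beta,k,l}\circ(1,2)^i$, where $(1,2)$ is the transposition. Set $C_{k,l}=\{\sigma_{\alpha,\beta,k,l}\mid 0\leq i\leq l-1,\ (\alpha,\beta)\in{\sf Sh}^1(l-i,i)\}\subseteq S_{k+l}$. *)

theory Defs
  imports "HOL-Combinatorics.Permutations" "HOL-Combinatorics.Transposition"
begin

text \<open>Elements of Z<x_1,x_2,...> are modelled by their coefficient functions on words
(lists of variable indices).  Every such function is an element of the ring of
noncommutative formal power series over Z, which contains the free associative ring
as a subring; all elements occurring below are finite combinations of monomials.\<close>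

type_synonym ncpoly = "nat list \<Rightarrow> int"

definition padd :: "ncpoly \<Rightarrow> ncpoly \<Rightarrow> ncpoly" where
  "padd p q = (\<lambda>w. p w + q w)"

definition psub :: "ncpoly \<Rightarrow> ncpoly \<Rightarrow> ncpoly" where
  "psub p q = (\<lambda>w. p w - q w)"

definition pmul :: "ncpoly \<Rightarrow> ncpoly \<Rightarrow> ncpoly" where
  "pmul p q = (\<lambda>w. \<Sum>i\<le>length w. p (take i w) * q (drop i w))"

definition mono :: "nat list \<Rightarrow> ncpoly" where
  "mono u = (\<lambda>w. if w = u then 1 else 0)"

definition X :: "nat \<Rightarrow> ncpoly" where
  "X i = mono [i]"

definition br :: "ncpoly \<Rightarrow> ncpoly \<Rightarrow> ncpoly" where
  "br u v = psub (pmul u v) (pmul v u)"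

definition lbr :: "nat list \<Rightarrow> ncpoly" where
  "lbr xs = foldl (\<lambda>u a. br u (X a)) (X (hd xs)) (tl xs)"

definition pword :: "nat \<Rightarrow> (nat \<Rightarrow> nat) \<Rightarrow> nat list" where
  "pword m \<sigma> = map \<sigma> [1..<m+1]"

definition psum :: "'a set \<Rightarrow> ('a \<Rightarrow> ncpoly) \<Rightarrow> ncpoly" where
  "psum T f = (\<lambda>w. \<Sum>a\<in>T. f a w)"

definition SumP :: "nat \<Rightarrow> (nat \<Rightarrow> nat) set \<Rightarrow> ncpoly" where
  "SumP m T = psum T (\<lambda>\<sigma>. mono (pword m \<sigma>))"

text \<open>beta_m: the additive map on gamma_m sending x_{\<sigma>(1)}...x_{\<sigma>(m)} to
[x_{\<sigma>(1)},...,x_{\<sigma>(m)}]; written as the linear extension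
p \<mapsto> \<Sum>_\<sigma> (coefficient of the \<sigma>-monomial in p) * bracket.\<close>
definition beta :: "nat \<Rightarrow> ncpoly \<Rightarrow> ncpoly" where
  "beta m p = psum {\<sigma>. \<sigma> permutes {1..m}}
      (\<lambda>\<sigma> w. p (pword m \<sigma>) * lbr (pword m \<sigma>) w)"

definition shuffle :: "nat \<Rightarrow> nat \<Rightarrow> (nat \<Rightarrow> nat) \<Rightarrow> (nat \<Rightarrow> nat) \<Rightarrow> bool" where
  "shuffle s t \<alpha> \<beta> \<longleftrightarrow>
     strict_mono_on {1..s} \<alpha> \<and> strict_mono_on {1..t} \<beta> \<and>
     \<alpha> ` {1..s} \<subseteq> {1..s+t} \<and> \<beta> ` {1..t} \<subseteq> {1..s+t} \<and>
     \<alpha> ` {1..s} \<inter> \<beta> ` {1..t} = {}"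

definition Sh1 :: "nat \<Rightarrow> nat \<Rightarrow> (nat \<Rightarrow> nat) \<Rightarrow> (nat \<Rightarrow> nat) \<Rightarrow> bool" where
  "Sh1 s t \<alpha> \<beta> \<longleftrightarrow> shuffle s t \<alpha> \<beta> \<and> \<alpha> 1 = 1"

definition sigma_tilde :: "(nat \<Rightarrow> nat) \<Rightarrow> (nat \<Rightarrow> nat) \<Rightarrow> nat \<Rightarrow> nat \<Rightarrow> nat \<Rightarrow> nat \<Rightarrow> nat" where
  "sigma_tilde \<alpha> \<beta> k l i j =
     (if 1 \<le> j \<and> j \<le> k then j
      else if k + 1 \<le> j \<and> j \<le> k + i then k + \<beta> (i + 1 - (j - k))
      else if k + i + 1 \<le> j \<and> j \<le> k + l then k + \<alpha> (j - k - i)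
      else j)"

definition sigma_abkl :: "(nat \<Rightarrow> nat) \<Rightarrow> (nat \<Rightarrow> nat) \<Rightarrow> nat \<Rightarrow> nat \<Rightarrow> nat \<Rightarrow> nat \<Rightarrow> nat" where
  "sigma_abkl \<alpha> \<beta> k l i = sigma_tilde \<alpha> \<beta> k l i \<circ> ((transpose (1::nat) 2) ^^ i)"

definition Ckl :: "nat \<Rightarrow> nat \<Rightarrow> (nat \<Rightarrow> nat) set" where
  "Ckl k l = {sigma_abkl \<alpha> \<beta> k l i | i \<alpha> \<beta>. i \<le> l - 1 \<and> Sh1 (l - i) i \<alpha> \<beta>}"

end

theory Submission
  imports Defs "HOL-Library.Function_Algebras"
begin

text \<open>Write u = [x_1, \<dots>, x_k] and y_j = x_{k+j}. Iterating the Jacobi identity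
[u, [v, y]] = [[u, v], y] - [[u, y], v] expands [u, [y_1, \<dots>, y_l]] into the sum over all
B \<subseteq> {2..l} of (-1)^|B| [u, y_{b_r}, \<dots>, y_{b_1}, y_{c_1}, \<dots>, y_{c_s}], where b_1 < \<dots> < b_r
are the elements of B and c_1 < \<dots> < c_s those of its complement in {1..l}. This bracket word is
the monomial of the permutation in C_{k,l} whose shuffle (\<alpha>, \<beta>) enumerates the c's and the b's,
except that for odd |B| the factor (1,2)^i swaps its first two letters; by antisymmetry of the
bracket this absorbs the sign. As B runs over the subsets of {2..l}, these permutations run
bijectively through C_{k,l}.\<close>

section \<open>Sums, sorted lists and enumerations\<close>

lemma sum_atMost_triangle_swap:
  "(\<Sum>i\<le>n. \<Sum>j\<le>i. g i j) = (\<Sum>j\<le>(n::nat). \<Sum>i\<in>{j..n}. g i j :: 'a::comm_monoid_add)"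
proof -
  have "(\<Sum>i\<le>n. \<Sum>j\<le>i. g i j) = (\<Sum>i\<le>n. \<Sum>j\<in>{j\<in>{..n}. j \<le> i}. g i j)"
    by (intro sum.cong) auto
  also have "\<dots> = (\<Sum>j\<le>n. \<Sum>i\<in>{i\<in>{..n}. j \<le> i}. g i j)"
    by (rule sum.swap_restrict) auto
  also have "\<dots> = (\<Sum>j\<le>n. \<Sum>i\<in>{j..n}. g i j)"
    by (intro sum.cong) auto
  finally show ?thesis .
qed

lemma sum_Pow_insert:
  assumes "finite A" "a \<notin> A"
  shows "(\<Sum>B\<in>Pow (insert a A). g B) = (\<Sum>B\<in>Pow A. g B) + (\<Sum>B\<in>Pow A. g (insert a B))"
proof -
  have "inj_on (insert a) (Pow A)"
    using assms(2) by (intro inj_onI) (metis PowD insert_ident subsetD)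
  moreover have "Pow A \<inter> insert a ` Pow A = {}"
    using assms(2) by auto
  ultimately show ?thesis
    using assms(1) by (simp add: Pow_insert sum.union_disjoint sum.reindex)
qed

lemma sorted_list_of_set_eqI:
  "sorted_wrt (<) xs \<Longrightarrow> set xs = A \<Longrightarrow> sorted_list_of_set A = (xs::'a::linorder list)"
  by (metis sorted_list_of_set_sort_remdups strict_sorted_iff distinct_remdups_id sorted_sort_id)

lemma sorted_list_of_set_insert_Max:
  "finite A \<Longrightarrow> \<forall>a\<in>A. a < x \<Longrightarrow> sorted_list_of_set (insert x A) = sorted_list_of_set A @ [x]"
  by (intro sorted_list_of_set_eqI) (auto simp: sorted_wrt_append)

lemma sorted_list_of_set_insert_Min:
  "finite A \<Longrightarrow> \<forall>a\<in>A. x < a \<Longrightarrow> sorted_list_of_set (insert x A) = x # sorted_list_of_set A"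
  by (intro sorted_list_of_set_eqI) auto

lemma sorted_list_of_set_diff_eq_Cons_1:
  fixes n :: nat
  assumes "1 \<le> n" "1 \<notin> B"
  shows "sorted_list_of_set ({1..n} - B) = 1 # sorted_list_of_set ({1..n} - B - {1})"
proof -
  have "insert 1 ({1..n} - B - {1}) = {1..n} - B"
    using assms by auto
  moreover have "sorted_list_of_set (insert 1 ({1..n} - B - {1})) = 1 # sorted_list_of_set ({1..n} - B - {1})"
    by (rule sorted_list_of_set_insert_Min) auto
  ultimately show ?thesis
    by simp
qed

lemma sorted_list_of_set_image_strict_mono:
  fixes f :: "nat \<Rightarrow> 'a::linorder"
  assumes "strict_mono_on {1..n} f"
  shows "sorted_list_of_set (f ` {1..n}) = map f [1..<n+1]"
proof (rule sorted_list_of_set_eqI)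
  show "sorted_wrt (<) (map f [1..<n+1])"
    using assms unfolding sorted_wrt_iff_nth_less by (auto simp: strict_mono_on_def simp del: upt_Suc)
  show "set (map f [1..<n+1]) = f ` {1..n}"
    by auto
qed

lemma card_image_strict_mono_on:
  fixes f :: "nat \<Rightarrow> 'a::linorder"
  shows "strict_mono_on {1..n} f \<Longrightarrow> card (f ` {1..n}) = n"
  by (simp add: card_image strict_mono_on_imp_inj_on)

lemma strict_mono_on_nth:
  "sorted_wrt (<) xs \<Longrightarrow> strict_mono_on {1..length xs} (\<lambda>j. xs ! (j - 1))"
  unfolding strict_mono_on_def sorted_wrt_iff_nth_less by auto

lemma image_nth_atLeastAtMost: "(\<lambda>j. xs ! (j - 1)) ` {1..length xs} = set xs"
proof
  show "(\<lambda>j. xs ! (j - 1)) ` {1..length xs} \<subseteq> set xs"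
    by auto
  show "set xs \<subseteq> (\<lambda>j. xs ! (j - 1)) ` {1..length xs}"
  proof
    fix x assume "x \<in> set xs"
    then obtain i where "i < length xs" "xs ! i = x"
      by (auto simp: in_set_conv_nth)
    then show "x \<in> (\<lambda>j. xs ! (j - 1)) ` {1..length xs}"
      by (intro image_eqI[of _ _ "Suc i"]) auto
  qed
qed

lemma upt_append: "a \<le> b \<Longrightarrow> b \<le> c \<Longrightarrow> [a..<b] @ [b..<c] = [a..<c]"
  using upt_add_eq_append[of a b "c - b"] by simp

lemma funpow_transpose: "transpose a b ^^ i = (if even i then id else transpose a b)"
  by (induction i) auto

section \<open>The ring of coefficient functions\<close>

lemma psum_eq_sum: "psum T f = (\<Sum>t\<in>T. f t)"
proof -
  have "(\<Sum>t\<in>T. f t) w = (\<Sum>t\<in>T. f t w)" for w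
    by (induction T rule: infinite_finite_induct) auto
  then show ?thesis by (auto simp: psum_def)
qed

lemma psub_eq_diff: "psub p q = p - q"
  by (auto simp: psub_def)

text \<open>Both sides sum \<open>p w\<^sub>1 * q w\<^sub>2 * r w\<^sub>3\<close> over the factorisations \<open>w = w\<^sub>1 w\<^sub>2 w\<^sub>3\<close>; they only
differ in the order of the two summations over the cut points.\<close>

lemma pmul_assoc: "pmul (pmul p q) r = pmul p (pmul q r)"
proof
  fix w :: "nat list"
  define n where "n = length w"
  have "pmul (pmul p q) r w = (\<Sum>i\<le>n. \<Sum>j\<le>i. p (take j w) * q (take (i-j) (drop j w)) * r (drop i w))"
    unfolding pmul_def n_def
    by (intro sum.cong refl) (auto simp: sum_distrib_right min_def take_drop)
  also have "\<dots> = (\<Sum>j\<le>n. \<Sum>i\<in>{j..n}. p (take j w) * q (take (i-j) (drop j w)) * r (drop i w))"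
    by (rule sum_atMost_triangle_swap)
  also have "\<dots> = (\<Sum>j\<le>n. p (take j w) * (\<Sum>i\<le>n - j. q (take i (drop j w)) * r (drop (i + j) w)))"
  proof (intro sum.cong refl)
    fix j assume "j \<in> {..n}"
    then show "(\<Sum>i\<in>{j..n}. p (take j w) * q (take (i-j) (drop j w)) * r (drop i w))
       = p (take j w) * (\<Sum>i\<le>n - j. q (take i (drop j w)) * r (drop (i + j) w))"
      using sum.shift_bounds_cl_nat_ivl[of "\<lambda>i. p (take j w) * q (take (i-j) (drop j w)) * r (drop i w)" 0 j "n - j"]
      by (simp add: sum_distrib_left atLeast0AtMost mult.assoc)
  qed
  also have "\<dots> = pmul p (pmul q r) w"
    by (simp add: pmul_def n_def add.commute)
  finally show "pmul (pmul p q) r w = pmul p (pmul q r) w" .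
qed

lemma pmul_diff_left: "pmul (p - q) r = pmul p r - pmul q r"
  unfolding pmul_def by (auto simp: algebra_simps sum_subtractf)

lemma pmul_diff_right: "pmul r (p - q) = pmul r p - pmul r q"
  unfolding pmul_def by (auto simp: algebra_simps sum_subtractf)

lemma pmul_sum_left: "pmul (\<Sum>t\<in>T. f t) q = (\<Sum>t\<in>T. pmul (f t) q)"
  unfolding psum_eq_sum[symmetric] pmul_def psum_def
  by (auto simp: sum_distrib_right intro!: ext) (rule sum.swap)

lemma pmul_sum_right: "pmul q (\<Sum>t\<in>T. f t) = (\<Sum>t\<in>T. pmul q (f t))"
  unfolding psum_eq_sum[symmetric] pmul_def psum_def
  by (auto simp: sum_distrib_left intro!: ext) (rule sum.swap)

lemma br_sum_left: "br (\<Sum>t\<in>T. f t) v = (\<Sum>t\<in>T. br (f t) v)"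
  by (simp add: br_def psub_eq_diff pmul_sum_left pmul_sum_right sum_subtractf)

lemma br_uminus_left: "br (- u) v = - br u v"
  unfolding br_def psub_eq_diff pmul_def by (auto simp: sum_negf)

lemma br_commute: "br v u = - br u v"
  by (simp add: br_def psub_eq_diff)

lemma br_Jacobi: "br u (br v y) = br (br u v) y - br (br u y) v"
  unfolding br_def psub_eq_diff pmul_diff_left pmul_diff_right pmul_assoc
  by (simp add: algebra_simps)

section \<open>Left-normed brackets\<close>

definition lbr_from :: "ncpoly \<Rightarrow> nat list \<Rightarrow> ncpoly" where
  "lbr_from u xs = foldl (\<lambda>v a. br v (X a)) u xs"

lemma lbr_from_Nil [simp]: "lbr_from u [] = u"
  by (simp add: lbr_from_def)

lemma lbr_Cons: "lbr (a # xs) = lbr_from (X a) xs"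
  by (simp add: lbr_def lbr_from_def)

lemma lbr_from_append: "lbr_from u (xs @ ys) = lbr_from (lbr_from u xs) ys"
  by (simp add: lbr_from_def)

lemma lbr_from_snoc: "lbr_from u (xs @ [a]) = br (lbr_from u xs) (X a)"
  by (simp add: lbr_from_def)

lemma lbr_from_Cons: "lbr_from u (a # xs) = lbr_from (br u (X a)) xs"
  by (simp add: lbr_from_def)

lemma lbr_append: "xs \<noteq> [] \<Longrightarrow> lbr (xs @ ys) = lbr_from (lbr xs) ys"
  by (cases xs) (simp_all add: lbr_Cons lbr_from_append)

lemma lbr_from_uminus: "lbr_from (- u) xs = - lbr_from u xs"
  by (induction xs arbitrary: u) (simp_all add: lbr_from_Cons br_uminus_left)

lemma lbr_swap: "lbr (b # a # xs) = - lbr (a # b # xs)"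
  by (simp add: lbr_Cons lbr_from_Cons br_commute[of "X b"] lbr_from_uminus)

fun swap_first_two :: "'a list \<Rightarrow> 'a list" where
  "swap_first_two (a # b # xs) = b # a # xs"
| "swap_first_two xs = xs"

lemma set_swap_first_two [simp]: "set (swap_first_two xs) = set xs"
  by (cases xs rule: swap_first_two.cases) auto

lemma distinct_swap_first_two [simp]: "distinct (swap_first_two xs) = distinct xs"
  by (cases xs rule: swap_first_two.cases) auto

lemma takeWhile_swap_first_two:
  "2 \<le> length xs \<Longrightarrow> \<forall>x\<in>set xs. P x \<Longrightarrow>
    takeWhile P (swap_first_two (xs @ ys)) = swap_first_two xs @ takeWhile P ys"
  by (cases xs rule: swap_first_two.cases) auto

lemma lbr_swap_first_two:
  assumes "2 \<le> length xs"
  shows "lbr (swap_first_two xs) = - lbr xs"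
proof -
  obtain a b ys where "xs = a # b # ys"
    using assms by (cases xs rule: swap_first_two.cases) auto
  then show ?thesis
    using lbr_swap[of b a ys] by simp
qed

definition signed :: "nat \<Rightarrow> ncpoly \<Rightarrow> ncpoly" where
  "signed n p = (if even n then p else - p)"

lemma br_signed_left: "br (signed n u) v = signed n (br u v)"
  by (simp add: signed_def br_uminus_left)

lemma signed_Suc: "signed (Suc n) u = - signed n u"
  by (simp add: signed_def)

section \<open>Expanding a bracket with a left-normed bracket\<close>

definition down_up_word :: "nat \<Rightarrow> nat set \<Rightarrow> nat list" where
  "down_up_word n B = rev (sorted_list_of_set B) @ sorted_list_of_set ({1..n} - B)"

lemma set_down_up_word: "B \<subseteq> {1..n} \<Longrightarrow> set (down_up_word n B) = {1..n}"
  using finite_subset[of B "{1..n}"] by (auto simp: down_up_word_def)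

lemma distinct_down_up_word: "B \<subseteq> {1..n} \<Longrightarrow> distinct (down_up_word n B)"
  using finite_subset[of B "{1..n}"] by (auto simp: down_up_word_def)

lemma length_down_up_word: "B \<subseteq> {1..n} \<Longrightarrow> length (down_up_word n B) = n"
  by (metis distinct_card set_down_up_word distinct_down_up_word card_atLeastAtMost diff_Suc_1)

lemma down_up_word_Suc:
  assumes "B \<subseteq> {1..n}"
  shows "down_up_word (Suc n) B = down_up_word n B @ [Suc n]"
proof -
  have "{1..Suc n} - B = insert (Suc n) ({1..n} - B)"
    using assms by auto
  moreover have "sorted_list_of_set (insert (Suc n) ({1..n} - B)) = sorted_list_of_set ({1..n} - B) @ [Suc n]"
    by (rule sorted_list_of_set_insert_Max) auto
  ultimately have "sorted_list_of_set ({1..Suc n} - B) = sorted_list_of_set ({1..n} - B) @ [Suc n]"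
    by simp
  then show ?thesis
    by (simp add: down_up_word_def)
qed

lemma down_up_word_Suc_insert:
  assumes "B \<subseteq> {1..n}"
  shows "down_up_word (Suc n) (insert (Suc n) B) = Suc n # down_up_word n B"
proof -
  have "{1..Suc n} - insert (Suc n) B = {1..n} - B"
    by auto
  moreover have "sorted_list_of_set (insert (Suc n) B) = sorted_list_of_set B @ [Suc n]"
    using assms finite_subset by (intro sorted_list_of_set_insert_Max) auto
  ultimately show ?thesis
    by (simp add: down_up_word_def)
qed

lemma br_lbr_expansion:
  assumes "1 \<le> n"
  shows "br u (lbr (map f [1..<n+1])) =
    (\<Sum>B\<in>Pow {2..n}. signed (card B) (lbr_from u (map f (down_up_word n B))))"
  using assms
proof (induction n arbitrary: u rule: dec_induct)
  case base
  show ?case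
    by (simp add: lbr_def lbr_from_def signed_def down_up_word_def)
next
  case (step n)
  let ?y = "X (f (Suc n))"
  let ?t = "\<lambda>n u B. signed (card B) (lbr_from u (map f (down_up_word n B)))"
  have ne: "map f [1..<n+1] \<noteq> []"
    using step.hyps by simp
  have "lbr (map f [1..<Suc n + 1]) = br (lbr (map f [1..<n+1])) ?y"
    using lbr_append[OF ne, of "[f (Suc n)]"] by (simp add: lbr_from_def)
  then have "br u (lbr (map f [1..<Suc n + 1])) =
      br (br u (lbr (map f [1..<n+1]))) ?y - br (br u ?y) (lbr (map f [1..<n+1]))"
    by (simp only: br_Jacobi)
  also have "\<dots> = br (\<Sum>B\<in>Pow {2..n}. ?t n u B) ?y - (\<Sum>B\<in>Pow {2..n}. ?t n (br u ?y) B)"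
    by (simp only: step.IH)
  also have "\<dots> = (\<Sum>B\<in>Pow {2..n}. ?t (Suc n) u B) + (\<Sum>B\<in>Pow {2..n}. ?t (Suc n) u (insert (Suc n) B))"
  proof -
    have B: "B \<subseteq> {1..n}" "finite B" "Suc n \<notin> B" if "B \<in> Pow {2..n}" for B
      using that finite_subset[of B "{2..n}"] by auto
    have "br (?t n u B) ?y = ?t (Suc n) u B" if "B \<in> Pow {2..n}" for B
      by (simp add: down_up_word_Suc[OF B(1)[OF that]] br_signed_left lbr_from_snoc)
    moreover have "- ?t n (br u ?y) B = ?t (Suc n) u (insert (Suc n) B)" if "B \<in> Pow {2..n}" for B
      by (simp add: B(2,3)[OF that] down_up_word_Suc_insert[OF B(1)[OF that]] lbr_from_Cons signed_Suc)
    ultimately show ?thesis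
      by (simp add: br_sum_left diff_conv_add_uminus flip: sum_negf)
  qed
  also have "\<dots> = (\<Sum>B\<in>Pow {2..Suc n}. ?t (Suc n) u B)"
    using step.hyps by (simp add: sum_Pow_insert atLeastAtMostSuc_conv)
  finally show ?case .
qed

section \<open>Shuffles\<close>

lemma shuffle_fst_image:
  assumes "shuffle s t \<alpha> \<beta>"
  shows "\<alpha> ` {1..s} = {1..s+t} - \<beta> ` {1..t}"
proof -
  have mono: "strict_mono_on {1..s} \<alpha>" "strict_mono_on {1..t} \<beta>"
    and sub: "\<alpha> ` {1..s} \<subseteq> {1..s+t}" "\<beta> ` {1..t} \<subseteq> {1..s+t}"
    and disj: "\<alpha> ` {1..s} \<inter> \<beta> ` {1..t} = {}"
    using assms by (simp_all add: shuffle_def)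
  have "card (\<alpha> ` {1..s}) = s" "card (\<beta> ` {1..t}) = t"
    using mono by (simp_all only: card_image_strict_mono_on)
  then have "card (\<alpha> ` {1..s} \<union> \<beta> ` {1..t}) = s + t"
    using disj by (simp add: card_Un_disjoint)
  then have "\<alpha> ` {1..s} \<union> \<beta> ` {1..t} = {1..s+t}"
    using sub by (intro card_subset_eq) auto
  then show ?thesis
    using disj by auto
qed

lemma Sh1_snd_image_subset:
  assumes "Sh1 s t \<alpha> \<beta>" "1 \<le> s"
  shows "\<beta> ` {1..t} \<subseteq> {2..s+t}"
proof -
  have shuffle: "shuffle s t \<alpha> \<beta>" and "\<alpha> 1 = 1"
    using assms(1) by (simp_all add: Sh1_def)
  then have "1 \<in> \<alpha> ` {1..s}"
    using assms(2) by force
  moreover have "\<beta> ` {1..t} \<subseteq> {1..s+t}"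
    using shuffle by (simp add: shuffle_def)
  ultimately have "\<beta> ` {1..t} \<subseteq> {1..s+t} - {1}"
    unfolding shuffle_fst_image[OF shuffle] by blast
  also have "{1..s+t} - {1} = {2..s+t}"
    by auto
  finally show ?thesis .
qed

lemma down_up_word_shuffle:
  assumes "shuffle s t \<alpha> \<beta>"
  shows "down_up_word (s+t) (\<beta> ` {1..t}) = rev (map \<beta> [1..<t+1]) @ map \<alpha> [1..<s+1]"
proof -
  have "sorted_list_of_set (\<alpha> ` {1..s}) = map \<alpha> [1..<s+1]"
    "sorted_list_of_set (\<beta> ` {1..t}) = map \<beta> [1..<t+1]"
    using assms by (simp_all only: shuffle_def sorted_list_of_set_image_strict_mono)
  then show ?thesis
    unfolding down_up_word_def shuffle_fst_image[OF assms, symmetric] by (simp only:)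
qed

lemma Sh1_exists:
  assumes "1 \<le> n" "B \<subseteq> {2..n}"
  obtains \<alpha> \<beta> where "Sh1 (n - card B) (card B) \<alpha> \<beta>" "\<beta> ` {1..card B} = B"
proof -
  define as where "as = sorted_list_of_set ({1..n} - B)"
  define bs where "bs = sorted_list_of_set B"
  have fin: "finite B"
    using assms(2) finite_subset by blast
  have "card ({1..n} - B) = n - card B"
    using assms(2) fin by (subst card_Diff_subset) auto
  then have len: "length as = n - card B" "length bs = card B"
    by (simp_all add: as_def bs_def)
  have im: "(\<lambda>j. as ! (j - 1)) ` {1..n - card B} = {1..n} - B" "(\<lambda>j. bs ! (j - 1)) ` {1..card B} = B"
  proof -
    have "set as = {1..n} - B" "set bs = B"
      using fin by (simp_all add: as_def bs_def)
    then show "(\<lambda>j. as ! (j - 1)) ` {1..n - card B} = {1..n} - B" "(\<lambda>j. bs ! (j - 1)) ` {1..card B} = B"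
      using image_nth_atLeastAtMost[of as] image_nth_atLeastAtMost[of bs] by (simp_all only: len)
  qed
  have "1 \<notin> B"
    using assms(2) by auto
  then have "as ! 0 = 1"
    using sorted_list_of_set_diff_eq_Cons_1[OF assms(1)] by (simp add: as_def)
  moreover have sorted: "sorted_wrt (<) as" "sorted_wrt (<) bs"
    by (simp_all add: as_def bs_def)
  have "strict_mono_on {1..n - card B} (\<lambda>j. as ! (j - 1))"
    using strict_mono_on_nth[OF sorted(1)] unfolding len(1) .
  moreover have "strict_mono_on {1..card B} (\<lambda>j. bs ! (j - 1))"
    using strict_mono_on_nth[OF sorted(2)] unfolding len(2) .
  moreover have "n - card B + card B = n"
    using card_mono[OF _ assms(2)] assms(1) by simp
  ultimately have "Sh1 (n - card B) (card B) (\<lambda>j. as ! (j - 1)) (\<lambda>j. bs ! (j - 1))"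
    using assms(2) unfolding Sh1_def shuffle_def im by auto
  then show ?thesis
    using im(2) that by blast
qed

section \<open>Monomials of permutations\<close>

lemma pword_comp_transpose_1_2:
  assumes "2 \<le> m"
  shows "pword m (f \<circ> transpose 1 2) = swap_first_two (pword m f)"
proof -
  have "[1..<m+1] = 1 # 2 # [3..<m+1]"
    using assms by (simp add: upt_conv_Cons numeral_3_eq_3 del: upt_Suc)
  moreover have "map (f \<circ> transpose 1 2) [3..<m+1] = map f [3..<m+1]"
    by auto
  ultimately show ?thesis
    by (simp add: pword_def)
qed

lemma permutesI_pword:
  assumes "\<And>x. x \<notin> {1..m} \<Longrightarrow> \<sigma> x = x" "distinct (pword m \<sigma>)" "set (pword m \<sigma>) = {1..m}"
  shows "\<sigma> permutes {1..m}"
proof (rule bij_imp_permutes)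
  have "set [1..<m+1] = {1..m}"
    by auto
  then show "bij_betw \<sigma> {1..m} {1..m}"
    using assms(2,3) by (simp add: pword_def bij_betw_def distinct_map)
qed (use assms(1) in blast)

lemma inj_on_pword: "inj_on (pword m) {\<sigma>. \<sigma> permutes {1..m}}"
proof (rule inj_onI)
  fix \<sigma> \<tau> assume "\<sigma> \<in> {\<sigma>. \<sigma> permutes {1..m}}" "\<tau> \<in> {\<sigma>. \<sigma> permutes {1..m}}"
    and "pword m \<sigma> = pword m \<tau>"
  have "\<sigma> x = \<tau> x" if "x \<in> {1..m}" for x
  proof -
    have "x \<in> set [1..<m+1]"
      using that by (simp del: upt_Suc)
    then show ?thesis
      using \<open>pword m \<sigma> = pword m \<tau>\<close> unfolding pword_def map_eq_conv by blast
  qed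
  then show "\<sigma> = \<tau>"
    using \<open>\<sigma> \<in> _\<close> \<open>\<tau> \<in> _\<close> by (metis mem_Collect_eq permutes_not_in ext)
qed

lemma beta_SumP:
  assumes "C \<subseteq> {\<sigma>. \<sigma> permutes {1..m}}"
  shows "beta m (SumP m C) = (\<Sum>\<sigma>\<in>C. lbr (pword m \<sigma>))"
proof -
  let ?P = "{\<sigma>. \<sigma> permutes {1..m}}"
  have fin: "finite ?P" "finite C"
    using assms finite_subset finite_permutations[of "{1..m}"] by auto
  have coeff: "SumP m C (pword m \<sigma>) = (if \<sigma> \<in> C then 1 else 0)" if "\<sigma> \<in> ?P" for \<sigma>
  proof -
    have "SumP m C (pword m \<sigma>) = (\<Sum>\<tau>\<in>C. if \<tau> = \<sigma> then 1 else 0)"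
      unfolding SumP_def psum_def mono_def
      using that assms inj_onD[OF inj_on_pword] by (intro sum.cong) auto
    then show ?thesis
      using fin(2) by simp
  qed
  have "beta m (SumP m C) = (\<Sum>\<sigma>\<in>?P. if \<sigma> \<in> C then lbr (pword m \<sigma>) else 0)"
    unfolding beta_def psum_eq_sum by (intro sum.cong) (auto simp: coeff)
  also have "\<dots> = (\<Sum>\<sigma>\<in>C. lbr (pword m \<sigma>))"
    using fin assms by (simp add: sum.If_cases Int_absorb1)
  finally show ?thesis .
qed

section \<open>The permutations in \<open>C\<^sub>k\<^sub>,\<^sub>l\<close>\<close>

definition Ckl_word :: "nat \<Rightarrow> nat \<Rightarrow> nat set \<Rightarrow> nat list" where
  "Ckl_word k l B = (if even (card B) then id else swap_first_two)
     ([1..<k+1] @ map ((+) k) (down_up_word l B))"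

lemma set_Ckl_word: "B \<subseteq> {1..l} \<Longrightarrow> set (Ckl_word k l B) = {1..k+l}"
proof -
  assume "B \<subseteq> {1..l}"
  then have "set (Ckl_word k l B) = {1..<k+1} \<union> (+) k ` {1..l}"
    by (simp add: Ckl_word_def set_down_up_word del: upt_Suc)
  also have "(+) k ` {1..l} = {k+1..k+l}"
    by (simp add: add.commute)
  also have "{1..<k+1} \<union> {k+1..k+l} = {1..k+l}"
    by auto
  finally show ?thesis .
qed

lemma distinct_Ckl_word: "B \<subseteq> {1..l} \<Longrightarrow> distinct (Ckl_word k l B)"
  by (auto simp: Ckl_word_def distinct_map distinct_down_up_word set_down_up_word)

lemma lbr_Ckl_word:
  assumes "1 \<le> k" "1 \<le> l" "B \<subseteq> {1..l}"
  shows "lbr (Ckl_word k l B) =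
    signed (card B) (lbr_from (lbr [1..<k+1]) (map ((+) k) (down_up_word l B)))"
proof -
  have "[1..<k+1] \<noteq> []" "2 \<le> length ([1..<k+1] @ map ((+) k) (down_up_word l B))"
    using assms by (simp_all add: length_down_up_word)
  then show ?thesis
    by (simp add: Ckl_word_def signed_def lbr_swap_first_two lbr_append del: upt_Suc)
qed

lemma set_takeWhile_Ckl_word:
  assumes "1 \<le> k" "1 \<le> l" "B \<subseteq> {2..l}"
  shows "set (takeWhile (\<lambda>x. x \<noteq> k + 1) (Ckl_word k l B)) = {1..k} \<union> (+) k ` B"
proof -
  define pre where "pre = [1..<k+1] @ map ((+) k) (rev (sorted_list_of_set B))"
  define rest where "rest = map ((+) k) (sorted_list_of_set ({1..l} - B - {1}))"
  have fin: "finite B"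
    using assms(3) finite_subset by blast
  have "sorted_list_of_set ({1..l} - B) = 1 # sorted_list_of_set ({1..l} - B - {1})"
    using assms(2,3) by (intro sorted_list_of_set_diff_eq_Cons_1) auto
  then have word: "Ckl_word k l B = (if even (card B) then id else swap_first_two) (pre @ (k + 1) # rest)"
    by (simp add: Ckl_word_def pre_def rest_def down_up_word_def del: upt_Suc)
  have set_pre: "set pre = {1..k} \<union> (+) k ` B"
    using fin by (auto simp: pre_def)
  have pre_avoids: "\<forall>x\<in>set pre. x \<noteq> k + 1"
    using assms(3) unfolding set_pre by auto
  have stop: "takeWhile (\<lambda>x. x \<noteq> k + 1) (pre @ (k + 1) # rest) = pre"
    using pre_avoids by (subst takeWhile_append2) auto
  have "set (takeWhile (\<lambda>x. x \<noteq> k + 1) (Ckl_word k l B)) = set pre"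
  proof (cases "even (card B)")
    case True
    then show ?thesis
      by (simp only: word stop if_True id_apply)
  next
    case False
    then have "B \<noteq> {}"
      by auto
    then have "0 < card B"
      using fin by (simp add: card_gt_0_iff)
    then have "2 \<le> length pre"
      using assms(1) by (simp add: pre_def)
    then show ?thesis
      using False pre_avoids by (simp only: word if_False takeWhile_swap_first_two) auto
  qed
  then show ?thesis
    unfolding set_pre .
qed

text \<open>\<open>B\<close> is recovered from its word as the set of \<open>j\<close> such that \<open>k + j\<close> precedes \<open>k + 1\<close>.\<close>

lemma inj_on_Ckl_word:
  assumes "1 \<le> k" "1 \<le> l"
  shows "inj_on (Ckl_word k l) (Pow {2..l})"
proof (rule inj_onI)
  let ?prefix = "\<lambda>B. set (takeWhile (\<lambda>x. x \<noteq> k + 1) (Ckl_word k l B))"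
  have recover: "B = {j. 0 < j \<and> k + j \<in> ?prefix B}" if "B \<in> Pow {2..l}" for B
    unfolding set_takeWhile_Ckl_word[OF assms PowD[OF that]] using that by auto
  fix B B' assume B: "B \<in> Pow {2..l}" and B': "B' \<in> Pow {2..l}"
    and eq: "Ckl_word k l B = Ckl_word k l B'"
  have "B = {j. 0 < j \<and> k + j \<in> ?prefix B}"
    using B by (rule recover)
  also have "\<dots> = B'"
    unfolding eq using B' by (rule recover[symmetric])
  finally show "B = B'" .
qed

lemma pword_sigma_tilde:
  assumes "i \<le> l"
  shows "pword (k+l) (sigma_tilde \<alpha> \<beta> k l i) =
    [1..<k+1] @ map ((+) k) (rev (map \<beta> [1..<i+1]) @ map \<alpha> [1..<l-i+1])"
proof -
  have "[1..<k+l+1] = [1..<k+1] @ [k+1..<k+i+1] @ [k+i+1..<k+l+1]"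
    using assms by (simp add: upt_append del: upt_Suc)
  moreover have "map (sigma_tilde \<alpha> \<beta> k l i) [1..<k+1] = [1..<k+1]"
    by (rule map_idI) (auto simp: sigma_tilde_def)
  moreover have "map (sigma_tilde \<alpha> \<beta> k l i) [k+1..<k+i+1] = map ((+) k) (rev (map \<beta> [1..<i+1]))"
    by (rule nth_equalityI) (auto simp: sigma_tilde_def rev_nth Suc_diff_Suc simp del: upt_Suc)
  moreover have "map (sigma_tilde \<alpha> \<beta> k l i) [k+i+1..<k+l+1] = map ((+) k) (map \<alpha> [1..<l-i+1])"
    using assms by (intro nth_equalityI) (auto simp: sigma_tilde_def simp del: upt_Suc)
  ultimately show ?thesis
    by (simp add: pword_def del: upt_Suc)
qed

lemma pword_sigma_abkl:
  assumes "Sh1 (l - i) i \<alpha> \<beta>" "i < l" "1 \<le> k"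
  shows "pword (k+l) (sigma_abkl \<alpha> \<beta> k l i) = Ckl_word k l (\<beta> ` {1..i})"
proof -
  have shuffle: "shuffle (l - i) i \<alpha> \<beta>"
    using assms(1) by (simp add: Sh1_def)
  then have "card (\<beta> ` {1..i}) = i"
    by (simp only: shuffle_def card_image_strict_mono_on)
  moreover have "pword (k+l) (sigma_tilde \<alpha> \<beta> k l i) = [1..<k+1] @ map ((+) k) (down_up_word l (\<beta> ` {1..i}))"
    using down_up_word_shuffle[OF shuffle] assms(2) by (simp add: pword_sigma_tilde del: upt_Suc)
  moreover have "pword (k+l) (sigma_tilde \<alpha> \<beta> k l i \<circ> transpose 1 2) =
      swap_first_two (pword (k+l) (sigma_tilde \<alpha> \<beta> k l i))"
    using assms(2,3) by (intro pword_comp_transpose_1_2) simp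
  ultimately show ?thesis
    by (simp add: sigma_abkl_def funpow_transpose Ckl_word_def del: upt_Suc)
qed

lemma sigma_abkl_fixes:
  assumes "x \<notin> {1..k+l}" "2 \<le> k + l" "i \<le> l"
  shows "sigma_abkl \<alpha> \<beta> k l i x = x"
proof -
  have "x \<noteq> 1" "x \<noteq> 2"
    using assms(1,2) by auto
  then have "(transpose 1 2 ^^ i) x = x"
    by (simp add: funpow_transpose)
  then show ?thesis
    using assms by (auto simp: sigma_abkl_def sigma_tilde_def)
qed

lemma CklE:
  assumes "\<sigma> \<in> Ckl k l" "1 \<le> l"
  obtains i \<alpha> \<beta> where "\<sigma> = sigma_abkl \<alpha> \<beta> k l i" "i < l" "Sh1 (l - i) i \<alpha> \<beta>"
  using assms by (auto simp: Ckl_def)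

lemma pword_Ckl:
  assumes "\<sigma> \<in> Ckl k l" "1 \<le> k" "1 \<le> l"
  obtains B where "B \<subseteq> {2..l}" "pword (k+l) \<sigma> = Ckl_word k l B"
proof -
  obtain i \<alpha> \<beta> where \<sigma>: "\<sigma> = sigma_abkl \<alpha> \<beta> k l i" and "i < l" and Sh1: "Sh1 (l - i) i \<alpha> \<beta>"
    using assms(1,3) by (rule CklE)
  then have "\<beta> ` {1..i} \<subseteq> {2..l}"
    using Sh1_snd_image_subset[OF Sh1] by simp
  then show ?thesis
    using that pword_sigma_abkl[OF Sh1 \<open>i < l\<close> assms(2)] \<sigma> by blast
qed

lemma Ckl_permutes:
  assumes "\<sigma> \<in> Ckl k l" "1 \<le> k" "1 \<le> l"
  shows "\<sigma> permutes {1..k+l}"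
proof (rule permutesI_pword)
  obtain B where "B \<subseteq> {2..l}" and word: "pword (k+l) \<sigma> = Ckl_word k l B"
    using assms by (rule pword_Ckl)
  then have "B \<subseteq> {1..l}"
    by auto
  then show "distinct (pword (k+l) \<sigma>)" "set (pword (k+l) \<sigma>) = {1..k+l}"
    unfolding word by (simp_all add: distinct_Ckl_word set_Ckl_word)
  show "\<sigma> x = x" if "x \<notin> {1..k+l}" for x
    using assms(1,3) that
    by (elim CklE) (use assms(2) sigma_abkl_fixes in auto)
qed

lemma pword_image_Ckl:
  assumes "1 \<le> k" "1 \<le> l"
  shows "pword (k+l) ` Ckl k l = Ckl_word k l ` Pow {2..l}"
proof
  show "pword (k+l) ` Ckl k l \<subseteq> Ckl_word k l ` Pow {2..l}"
    by (auto elim!: pword_Ckl[OF _ assms])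
  show "Ckl_word k l ` Pow {2..l} \<subseteq> pword (k+l) ` Ckl k l"
  proof
    fix w assume "w \<in> Ckl_word k l ` Pow {2..l}"
    then obtain B where B: "B \<subseteq> {2..l}" and w: "w = Ckl_word k l B"
      by blast
    obtain \<alpha> \<beta> where Sh1: "Sh1 (l - card B) (card B) \<alpha> \<beta>" and \<beta>: "\<beta> ` {1..card B} = B"
      using Sh1_exists[OF assms(2) B] .
    have "card B \<le> l - 1"
      using card_mono[OF _ B] by simp
    then have "sigma_abkl \<alpha> \<beta> k l (card B) \<in> Ckl k l"
      using Sh1 by (auto simp: Ckl_def)
    moreover have "pword (k+l) (sigma_abkl \<alpha> \<beta> k l (card B)) = w"
      using pword_sigma_abkl[OF Sh1 _ assms(1)] \<open>card B \<le> l - 1\<close> assms(2) \<beta> w by simp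
    ultimately show "w \<in> pword (k+l) ` Ckl k l"
      by blast
  qed
qed

theorem lemma3:
  fixes k l :: nat
  assumes "k \<ge> 1" and "l \<ge> 1"
  shows "br (lbr [1..<k+1]) (lbr [k+1..<k+l+1]) = beta (k + l) (SumP (k + l) (Ckl k l))"
proof -
  have perm: "Ckl k l \<subseteq> {\<sigma>. \<sigma> permutes {1..k+l}}"
    using Ckl_permutes assms by blast
  have "beta (k + l) (SumP (k + l) (Ckl k l)) = (\<Sum>\<sigma>\<in>Ckl k l. lbr (pword (k+l) \<sigma>))"
    using perm by (rule beta_SumP)
  also have "\<dots> = (\<Sum>w\<in>pword (k+l) ` Ckl k l. lbr w)"
    using inj_on_subset[OF inj_on_pword perm] by (simp add: sum.reindex)
  also have "\<dots> = (\<Sum>B\<in>Pow {2..l}. lbr (Ckl_word k l B))"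
    using inj_on_Ckl_word[OF assms] by (simp add: pword_image_Ckl[OF assms] sum.reindex)
  also have "\<dots> = (\<Sum>B\<in>Pow {2..l}. signed (card B) (lbr_from (lbr [1..<k+1]) (map ((+) k) (down_up_word l B))))"
    by (intro sum.cong refl lbr_Ckl_word[OF assms]) auto
  also have "\<dots> = br (lbr [1..<k+1]) (lbr (map ((+) k) [1..<l+1]))"
    using assms(2) by (rule br_lbr_expansion[symmetric])
  also have "map ((+) k) [1..<l+1] = [k+1..<k+l+1]"
    by (rule nth_equalityI) (simp_all del: upt_Suc)
  finally show ?thesis ..
qed

end
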